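(* (a) Let $C$ and $D$ be cones in $\mathbb{R}^n$ and $x_1,x_2,x_3\in\mathbb{R}^n$ three distinct collinear points with $x_3\notin[x_1,x_2]$. Then the polyhedra $(x_1+C)\cap(x_3+D)$ and $(x_2+C)\cap(x_3+D)$ are homothetic. (b) Let $n\ge2$ and $z\in\mathbb{R}^n$ with $\dim\big(\Diamond_n\cap(z+\Diamond_n)\big)=n$. Then there exists $\epsilon>0$ such that for all $\lambda\in(1-\epsilon,1+\epsilon)$, $$\mathcal{N}\Big(\big(e_n+\mathbb{R}_+(\Diamond_n-e_n)\big)\cap\big(\lambda z-e_n+\mathbb{R}_+(\Diamond_n+e_n)\big)\Big)=\mathcal{N}\Big(\big(e_n+\mathbb{R}_+(\Diamond_n-e_n)\big)\cap\big(z-e_n+\mathbb{R}_+(\Diamond_n+e_n)\big)\Big).$$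
   Context: A cone is a finitely generated pointed polyhedral cone $\mathbb{R}_+x_1+\cdots+\mathbb{R}_+x_k\subset\mathbb{R}^n$ containing no nonzero linear subspace; $\mathbb{R}_+X$ denotes the set of nonnegative linear combinations of elements of $X$. $\Diamond_n=\operatorname{conv}(\pm e_1,\ldots,\pm e_n)\subset\mathbb{R}^n$. For an $n$-dimensional polytope $P\subset\mathbb{R}^n$, its normal fan $\mathcal{N}(P)$ is the fan whose maximal cones are $(\mathbb{R}_+(P-v))^{\circ}$ for $v$ ranging over the vertices of $P$, where $C^{\circ}=\{x:x\cdot y\ge0\text{ for all }y\in C\}$. *)

theory Defs
  imports "HOL-Analysis.Analysis"
begin

text \<open>\<open>\<real>\<^sub>+X\<close>: the set of nonnegative linear combinations of (finitely many) elements of X.\<close>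
definition nonneg_comb :: "('a::real_vector) set \<Rightarrow> 'a set" where
  "nonneg_comb X = {y. \<exists>S c. finite S \<and> S \<subseteq> X \<and> (\<forall>x\<in>S. c x \<ge> (0::real)) \<and>
                          y = (\<Sum>x\<in>S. c x *\<^sub>R x)}"

definition is_cone :: "('a::real_vector) set \<Rightarrow> bool" where
  "is_cone C \<longleftrightarrow> (\<exists>X. finite X \<and> C = nonneg_comb X) \<and>
                 (\<forall>L. subspace L \<and> L \<subseteq> C \<longrightarrow> L = {0})"

definition dual_cone :: "('a::real_inner) set \<Rightarrow> 'a set" where
  "dual_cone C = {x. \<forall>y\<in>C. x \<bullet> y \<ge> 0}"

text \<open>Normal fan, represented by its set of maximal cones.\<close>
definition normal_fan :: "('a::real_inner) set \<Rightarrow> 'a set set" where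
  "normal_fan P = {dual_cone (nonneg_comb ((\<lambda>y. y - v) ` P)) | v. v extreme_point_of P}"

definition cross_polytope :: "(real^'n) set" where
  "cross_polytope = convex hull (\<Union>i. {axis i 1, - axis i 1})"

definition homothetic :: "('a::real_vector) set \<Rightarrow> 'a set \<Rightarrow> bool" where
  "homothetic P Q \<longleftrightarrow> (\<exists>c t. c > 0 \<and> P = (\<lambda>x. t + c *\<^sub>R x) ` Q)"

end

theory Submission
  imports Defs
begin

text \<open>
  (a) Write \<open>x1 - x3 = c (x2 - x3)\<close>. Since the points are collinear and x3 lies outside the
  segment \<open>[x1, x2]\<close>, the ratio c is positive. The homothety with centre x3 and ratio c maps
  \<open>x2 + C\<close> onto \<open>x1 + C\<close> and fixes \<open>x3 + D\<close>, because cones are invariant under positive scaling.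

  (b) The cone \<open>e_n + \<real>\<^sub>+(\<Diamond>_n - e_n)\<close> is \<open>{x. x_n + \<Sum>_{j\<noteq>n} |x_j| \<le> 1}\<close>, and similarly for the
  second cone. Put \<open>u = t z\<close> and \<open>s = 2 - u_n - \<Sum>_{j\<noteq>n} |u_j|\<close>. If \<open>s > 0\<close>, the intersection of
  the two cones is the Minkowski sum \<open>(1 - s/2) e_n + (s/2) \<Diamond>_n + Z(u)\<close>, where \<open>Z(u)\<close> is the
  zonotope generated by the segments \<open>[0, u_j e_j - |u_j| e_n]\<close>, \<open>j \<noteq> n\<close>, and \<open>Z(t z) = t Z(z)\<close>.
  The normal fan of \<open>w + \<alpha> A + \<beta> B\<close> with \<open>\<alpha>, \<beta> > 0\<close> is the common refinement of the normal
  fans of A and B, so it does not depend on t. Finally, \<open>\<Diamond>_n \<inter> (z + \<Diamond>_n)\<close> can only be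
  full-dimensional if \<open>\<Sum>_j |z_j| < 2\<close>, and this keeps \<open>s > 0\<close> for all t close to 1.
\<close>

section \<open>Nonnegative combinations\<close>

lemma convex_cone_sum:
  assumes "convex_cone S" "\<And>i. i \<in> I \<Longrightarrow> f i \<in> S"
  shows "(\<Sum>i\<in>I. f i) \<in> S"
  using assms(2) by (induction I rule: infinite_finite_induct)
    (auto intro: convex_cone_add convex_cone_contains_0[OF assms(1)] assms(1))

lemma subset_nonneg_comb: "X \<subseteq> nonneg_comb X"
proof
  fix x assume "x \<in> X"
  then show "x \<in> nonneg_comb X"
    unfolding nonneg_comb_def by (intro CollectI exI[of _ "{x}"] exI[of _ "\<lambda>_. 1"]) auto
qed

lemma nonneg_comb_add:
  assumes "u \<in> nonneg_comb X" "v \<in> nonneg_comb X"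
  shows "u + v \<in> nonneg_comb X"
proof -
  obtain S c T d where S: "finite S" "S \<subseteq> X" "\<forall>x\<in>S. c x \<ge> 0" "u = (\<Sum>x\<in>S. c x *\<^sub>R x)"
    and T: "finite T" "T \<subseteq> X" "\<forall>x\<in>T. d x \<ge> 0" "v = (\<Sum>x\<in>T. d x *\<^sub>R x)"
    using assms unfolding nonneg_comb_def by blast
  define e where "e x = (if x \<in> S then c x else 0) + (if x \<in> T then d x else 0)" for x
  have "u + v = (\<Sum>x\<in>S \<union> T. (if x \<in> S then c x *\<^sub>R x else 0))
               + (\<Sum>x\<in>S \<union> T. (if x \<in> T then d x *\<^sub>R x else 0))"
    using S T by (simp add: sum.inter_restrict[symmetric] Int_absorb1)
  also have "\<dots> = (\<Sum>x\<in>S \<union> T. e x *\<^sub>R x)"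
    by (auto simp: e_def scaleR_add_left sum.distrib intro!: arg_cong2[where f="(+)"] sum.cong)
  finally have "u + v = (\<Sum>x\<in>S \<union> T. e x *\<^sub>R x)" .
  moreover have "\<forall>x\<in>S \<union> T. e x \<ge> 0" using S T by (simp add: e_def)
  ultimately show ?thesis
    unfolding nonneg_comb_def using S T by (intro CollectI exI[of _ "S \<union> T"] exI[of _ e]) auto
qed

lemma nonneg_comb_scaleR:
  assumes "u \<in> nonneg_comb X" "r \<ge> 0"
  shows "r *\<^sub>R u \<in> nonneg_comb X"
proof -
  obtain S c where "finite S" "S \<subseteq> X" "\<forall>x\<in>S. c x \<ge> 0" "u = (\<Sum>x\<in>S. c x *\<^sub>R x)"
    using assms(1) unfolding nonneg_comb_def by blast
  moreover have "r *\<^sub>R (\<Sum>x\<in>S. c x *\<^sub>R x) = (\<Sum>x\<in>S. (r * c x) *\<^sub>R x)"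
    by (simp add: scaleR_sum_right)
  ultimately show ?thesis
    unfolding nonneg_comb_def using assms(2)
    by (intro CollectI exI[of _ S] exI[of _ "\<lambda>x. r * c x"]) auto
qed

lemma convex_cone_nonneg_comb: "convex_cone (nonneg_comb X)"
proof -
  have "0 \<in> nonneg_comb X"
    unfolding nonneg_comb_def by (intro CollectI exI[of _ "{}"]) auto
  then show ?thesis
    unfolding convex_cone_iff by (blast intro: nonneg_comb_add nonneg_comb_scaleR)
qed

lemma nonneg_comb_eq_convex_cone_hull: "nonneg_comb X = convex_cone hull X"
proof
  show "nonneg_comb X \<subseteq> convex_cone hull X"
    unfolding nonneg_comb_def
    by (blast intro: convex_cone_sum convex_cone_convex_cone_hull convex_cone_hull_mul hull_inc)
  show "convex_cone hull X \<subseteq> nonneg_comb X"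
    by (rule hull_minimal[where S = convex_cone, OF subset_nonneg_comb convex_cone_nonneg_comb])
qed

lemma is_cone_imp_conic: "is_cone C \<Longrightarrow> conic C"
  unfolding is_cone_def nonneg_comb_eq_convex_cone_hull by (auto intro: conic_convex_cone_hull)

lemma nonneg_comb_uminus: "nonneg_comb (uminus ` X) = uminus ` nonneg_comb X"
  unfolding nonneg_comb_eq_convex_cone_hull by (rule convex_cone_hull_linear_image[OF linear_uminus])

lemma dual_cone_nonneg_comb: "dual_cone (nonneg_comb X) = dual_cone X"
proof -
  have "convex_cone hull X \<subseteq> {y. x \<bullet> y \<ge> 0} \<longleftrightarrow> X \<subseteq> {y. x \<bullet> y \<ge> 0}" for x
    using hull_subset[of X convex_cone] convex_cone_halfspace_ge[of x]
      hull_minimal[of X "{y. x \<bullet> y \<ge> 0}" convex_cone]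
    by (meson order_trans)
  then show ?thesis
    unfolding dual_cone_def nonneg_comb_eq_convex_cone_hull by (auto simp: subset_iff)
qed

section \<open>Homothetic intersections of translated cones\<close>

lemma conic_scaleR_image_eq:
  assumes "conic C" "c > 0"
  shows "(\<lambda>x. c *\<^sub>R x) ` C = C"
proof
  show "(\<lambda>x. c *\<^sub>R x) ` C \<subseteq> C" using assms by (auto intro: conicD)
  show "C \<subseteq> (\<lambda>x. c *\<^sub>R x) ` C"
  proof
    fix x assume "x \<in> C"
    then have "inverse c *\<^sub>R x \<in> C" using assms by (auto intro: conicD)
    moreover have "x = c *\<^sub>R (inverse c *\<^sub>R x)" using assms by simp
    ultimately show "x \<in> (\<lambda>x. c *\<^sub>R x) ` C" by blast
  qed
qed

lemma homothetic_translated_conic_Int: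
  assumes C: "conic C" and D: "conic D" and c: "c > 0" and x13: "x1 - x3 = c *\<^sub>R (x2 - x3)"
  shows "homothetic (((+) x1 ` C) \<inter> ((+) x3 ` D)) (((+) x2 ` C) \<inter> ((+) x3 ` D))"
proof -
  have x1: "x1 = x3 + c *\<^sub>R (x2 - x3)" using x13 by (metis diff_add_cancel add.commute)
  define h where "h y = (1 - c) *\<^sub>R x3 + c *\<^sub>R y" for y
  have "inj h" using c by (auto simp: h_def intro: injI)
  have "h ` ((+) x2 ` C) = (+) x1 ` ((\<lambda>y. c *\<^sub>R y) ` C)"
    unfolding image_image h_def by (rule image_cong[OF refl]) (simp add: x1 algebra_simps)
  also have "\<dots> = (+) x1 ` C" using conic_scaleR_image_eq[OF C c] by simp
  finally have hC: "h ` ((+) x2 ` C) = (+) x1 ` C" .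
  have "h ` ((+) x3 ` D) = (+) x3 ` ((\<lambda>y. c *\<^sub>R y) ` D)"
    unfolding image_image h_def by (rule image_cong[OF refl]) (simp add: algebra_simps)
  also have "\<dots> = (+) x3 ` D" using conic_scaleR_image_eq[OF D c] by simp
  finally have hD: "h ` ((+) x3 ` D) = (+) x3 ` D" .
  have "((+) x1 ` C) \<inter> ((+) x3 ` D) = h ` (((+) x2 ` C) \<inter> ((+) x3 ` D))"
    unfolding image_Int[OF \<open>inj h\<close>] hC hD ..
  then show ?thesis unfolding homothetic_def h_def using c by blast
qed

lemma collinear_not_in_segment_imp_positive_ratio:
  assumes "x1 \<noteq> x3" "x2 \<noteq> x3" "collinear {x1, x2, x3}" "x3 \<notin> closed_segment x1 x2"
  shows "\<exists>c>0. x1 - x3 = c *\<^sub>R (x2 - x3)"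
proof -
  obtain u where u: "x2 = u *\<^sub>R x1 + (1 - u) *\<^sub>R x3"
    using assms(1,3) unfolding collinear_3_expand by blast
  then have x23: "x2 - x3 = u *\<^sub>R (x1 - x3)" by (simp add: algebra_simps)
  have "u \<noteq> 0" using assms(2) u by auto
  have "u > 0"
  proof (rule ccontr)
    assume "\<not> u > 0"
    with \<open>u \<noteq> 0\<close> have "u < 0" by simp
    define v where "v = 1 / (1 - u)"
    have "0 \<le> v" "v \<le> 1" using \<open>u < 0\<close> by (auto simp: v_def)
    moreover have "x3 = (1 - v) *\<^sub>R x1 + v *\<^sub>R x2"
    proof -
      have "v * (1 - u) = 1" using \<open>u < 0\<close> by (simp add: v_def)
      then have "(1 - v) *\<^sub>R x1 + v *\<^sub>R x2 = x1 - (v * (1 - u)) *\<^sub>R (x1 - x3)"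
        by (simp add: u algebra_simps)
      then show ?thesis using \<open>v * (1 - u) = 1\<close> by simp
    qed
    ultimately have "x3 \<in> closed_segment x1 x2" unfolding in_segment by blast
    then show False using assms(4) by simp
  qed
  then show ?thesis using x23 by (intro exI[of _ "inverse u"]) auto
qed

lemma homothetic_translated_cones_Int:
  assumes "is_cone C" "is_cone D" "x1 \<noteq> x3" "x2 \<noteq> x3" "collinear {x1, x2, x3}"
    "x3 \<notin> closed_segment x1 x2"
  shows "homothetic (((+) x1 ` C) \<inter> ((+) x3 ` D)) (((+) x2 ` C) \<inter> ((+) x3 ` D))"
proof -
  obtain c where "c > 0" "x1 - x3 = c *\<^sub>R (x2 - x3)"
    using collinear_not_in_segment_imp_positive_ratio assms(3-6) by blast
  then show ?thesis using homothetic_translated_conic_Int is_cone_imp_conic assms(1,2) by blast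
qed

section \<open>Normal fans of Minkowski sums\<close>

text \<open>Inner normal cones, with the sign convention of \<open>dual_cone\<close> in \<open>normal_fan\<close>.\<close>
definition normal_cone :: "'a::real_inner set \<Rightarrow> 'a \<Rightarrow> 'a set" where
  "normal_cone A a = {x. \<forall>p\<in>A. x \<bullet> a \<le> x \<bullet> p}"

definition exposes :: "'a::real_inner \<Rightarrow> 'a set \<Rightarrow> 'a \<Rightarrow> bool" where
  "exposes x A a \<longleftrightarrow> a \<in> A \<and> (\<forall>p\<in>A. p \<noteq> a \<longrightarrow> x \<bullet> a < x \<bullet> p)"

lemma normal_fan_eq_normal_cones: "normal_fan P = {normal_cone P v | v. v extreme_point_of P}"
proof -
  have "dual_cone ((\<lambda>y. y - v) ` P) = normal_cone P v" for v
    by (auto simp: dual_cone_def normal_cone_def inner_diff_right)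
  then show ?thesis unfolding normal_fan_def dual_cone_nonneg_comb by simp
qed

lemma extreme_point_of_polyhedron_iff_exposes:
  fixes P :: "'a::euclidean_space set"
  assumes "polyhedron P"
  shows "v extreme_point_of P \<longleftrightarrow> (\<exists>x. exposes x P v)"
proof
  assume "v extreme_point_of P"
  then have "{v} exposed_face_of P"
    by (simp add: exposed_face_of_polyhedron[OF assms] face_of_singleton)
  then obtain c d where cd: "P \<subseteq> {x. c \<bullet> x \<le> d}" "{v} = P \<inter> {x. c \<bullet> x = d}"
    unfolding exposed_face_of_def by blast
  have "exposes (- c) P v" unfolding exposes_def
  proof (intro conjI ballI impI)
    show "v \<in> P" using cd(2) by blast
    fix p assume "p \<in> P" "p \<noteq> v"
    then have "c \<bullet> p \<le> d" "c \<bullet> p \<noteq> d" using cd by auto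
    moreover have "c \<bullet> v = d" using cd(2) by blast
    ultimately show "- c \<bullet> v < - c \<bullet> p" by simp
  qed
  then show "\<exists>x. exposes x P v" ..
next
  assume "\<exists>x. exposes x P v"
  then obtain x where "exposes x P v" ..
  then have "P \<inter> {y. x \<bullet> y = x \<bullet> v} = {v}" "\<And>y. y \<in> P \<Longrightarrow> x \<bullet> y \<ge> x \<bullet> v"
    unfolding exposes_def by force+
  then show "v extreme_point_of P" by (rule extreme_point_of_Int_supporting_hyperplane_ge)
qed

definition shifted_minkowski_sum :: "'a::real_vector \<Rightarrow> real \<Rightarrow> 'a set \<Rightarrow> real \<Rightarrow> 'a set \<Rightarrow> 'a set" where
  "shifted_minkowski_sum w \<alpha> A \<beta> B = (\<lambda>(p, q). w + \<alpha> *\<^sub>R p + \<beta> *\<^sub>R q) ` (A \<times> B)"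

text \<open>The maximal cones of the common refinement of the normal fans of A and B.\<close>
definition fan_refinement :: "'a::real_inner set \<Rightarrow> 'a set \<Rightarrow> 'a set set" where
  "fan_refinement A B =
     {normal_cone A a \<inter> normal_cone B b | a b. \<exists>x. exposes x A a \<and> exposes x B b}"

lemma shifted_minkowski_sumI [intro]:
  "p \<in> A \<Longrightarrow> q \<in> B \<Longrightarrow> w + \<alpha> *\<^sub>R p + \<beta> *\<^sub>R q \<in> shifted_minkowski_sum w \<alpha> A \<beta> B"
  unfolding shifted_minkowski_sum_def by force

lemma shifted_minkowski_sumE [elim]:
  assumes "y \<in> shifted_minkowski_sum w \<alpha> A \<beta> B"
  obtains p q where "p \<in> A" "q \<in> B" "y = w + \<alpha> *\<^sub>R p + \<beta> *\<^sub>R q"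
  using assms unfolding shifted_minkowski_sum_def by auto

lemma polytope_shifted_minkowski_sum:
  fixes A B :: "'a::euclidean_space set"
  assumes "polytope A" "polytope B"
  shows "polytope (shifted_minkowski_sum w \<alpha> A \<beta> B)"
proof -
  have "shifted_minkowski_sum w \<alpha> A \<beta> B
      = (+) w ` ((\<lambda>pq. \<alpha> *\<^sub>R fst pq + \<beta> *\<^sub>R snd pq) ` (A \<times> B))"
    unfolding shifted_minkowski_sum_def image_image by (rule image_cong) (auto simp: add.assoc)
  moreover have "linear (\<lambda>pq::'a \<times> 'a. \<alpha> *\<^sub>R fst pq + \<beta> *\<^sub>R snd pq)"
    by (rule linearI) (simp_all add: algebra_simps)
  ultimately show ?thesis
    using polytope_linear_image[OF _ polytope_Times[OF assms]] by (simp add: polytope_translation_eq)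
qed

lemma shifted_minkowski_sum_scaleR_image:
  "shifted_minkowski_sum w \<alpha> A \<beta> ((\<lambda>q. \<gamma> *\<^sub>R q) ` B) = shifted_minkowski_sum w \<alpha> A (\<beta> * \<gamma>) B"
  unfolding shifted_minkowski_sum_def by (force simp: image_iff)

lemma normal_cone_shifted_minkowski_sum:
  assumes "\<alpha> > 0" "\<beta> > 0" "a \<in> A" "b \<in> B"
  shows "normal_cone (shifted_minkowski_sum w \<alpha> A \<beta> B) (w + \<alpha> *\<^sub>R a + \<beta> *\<^sub>R b)
           = normal_cone A a \<inter> normal_cone B b"
proof safe
  fix x assume x: "x \<in> normal_cone (shifted_minkowski_sum w \<alpha> A \<beta> B) (w + \<alpha> *\<^sub>R a + \<beta> *\<^sub>R b)"
  have "x \<bullet> (w + \<alpha> *\<^sub>R a + \<beta> *\<^sub>R b) \<le> x \<bullet> (w + \<alpha> *\<^sub>R p + \<beta> *\<^sub>R q)" if "p \<in> A" "q \<in> B" for p q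
    using x that unfolding normal_cone_def shifted_minkowski_sum_def by force
  then show "x \<in> normal_cone A a" "x \<in> normal_cone B b"
    using assms unfolding normal_cone_def by (fastforce simp: inner_add_right)+
next
  fix x assume "x \<in> normal_cone A a" "x \<in> normal_cone B b"
  then show "x \<in> normal_cone (shifted_minkowski_sum w \<alpha> A \<beta> B) (w + \<alpha> *\<^sub>R a + \<beta> *\<^sub>R b)"
    using assms unfolding normal_cone_def shifted_minkowski_sum_def
    by (auto simp: inner_add_right intro!: add_mono mult_left_mono)
qed

lemma exposes_shifted_minkowski_sum:
  assumes \<alpha>: "\<alpha> > 0" and \<beta>: "\<beta> > 0" and "a \<in> A" "b \<in> B"
  shows "exposes x (shifted_minkowski_sum w \<alpha> A \<beta> B) (w + \<alpha> *\<^sub>R a + \<beta> *\<^sub>R b)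
           \<longleftrightarrow> exposes x A a \<and> exposes x B b"
proof
  assume ex: "exposes x (shifted_minkowski_sum w \<alpha> A \<beta> B) (w + \<alpha> *\<^sub>R a + \<beta> *\<^sub>R b)"
  have "x \<bullet> (w + \<alpha> *\<^sub>R a + \<beta> *\<^sub>R b) < x \<bullet> y"
    if "y \<in> shifted_minkowski_sum w \<alpha> A \<beta> B" "y \<noteq> w + \<alpha> *\<^sub>R a + \<beta> *\<^sub>R b" for y
    using ex that unfolding exposes_def by blast
  from this[of "w + \<alpha> *\<^sub>R _ + \<beta> *\<^sub>R b"] this[of "w + \<alpha> *\<^sub>R a + \<beta> *\<^sub>R _"]
  show "exposes x A a \<and> exposes x B b"
    using assms unfolding exposes_def by (auto simp: inner_add_right)
next
  assume "exposes x A a \<and> exposes x B b"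
  then have le: "x \<bullet> a \<le> x \<bullet> p" "x \<bullet> b \<le> x \<bullet> q" and lt: "p \<noteq> a \<Longrightarrow> x \<bullet> a < x \<bullet> p" "q \<noteq> b \<Longrightarrow> x \<bullet> b < x \<bullet> q"
    if "p \<in> A" "q \<in> B" for p q
    using that unfolding exposes_def by (metis order_le_less)+
  have "\<alpha> * (x \<bullet> a) + \<beta> * (x \<bullet> b) < \<alpha> * (x \<bullet> p) + \<beta> * (x \<bullet> q)"
    if "p \<in> A" "q \<in> B" "p \<noteq> a \<or> q \<noteq> b" for p q
    using le[OF that(1,2)] lt[OF that(1,2)] that(3) \<alpha> \<beta>
    by (auto intro: add_less_le_mono add_le_less_mono mult_left_mono)
  then show "exposes x (shifted_minkowski_sum w \<alpha> A \<beta> B) (w + \<alpha> *\<^sub>R a + \<beta> *\<^sub>R b)"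
    using assms unfolding exposes_def shifted_minkowski_sum_def by (auto simp: inner_add_right)
qed

lemma normal_fan_shifted_minkowski_sum:
  fixes A B :: "'a::euclidean_space set"
  assumes "\<alpha> > 0" "\<beta> > 0" "polyhedron (shifted_minkowski_sum w \<alpha> A \<beta> B)"
  shows "normal_fan (shifted_minkowski_sum w \<alpha> A \<beta> B) = fan_refinement A B"
proof -
  have "normal_fan (shifted_minkowski_sum w \<alpha> A \<beta> B)
      = {normal_cone (shifted_minkowski_sum w \<alpha> A \<beta> B) v | v.
           \<exists>x. exposes x (shifted_minkowski_sum w \<alpha> A \<beta> B) v}"
    by (simp add: normal_fan_eq_normal_cones extreme_point_of_polyhedron_iff_exposes[OF assms(3)])
  also have "\<dots> = fan_refinement A B"
    unfolding fan_refinement_def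
  proof safe
    fix v x assume ex: "exposes x (shifted_minkowski_sum w \<alpha> A \<beta> B) v"
    then obtain a b where ab: "a \<in> A" "b \<in> B" "v = w + \<alpha> *\<^sub>R a + \<beta> *\<^sub>R b"
      unfolding exposes_def by blast
    then show "\<exists>a b. normal_cone (shifted_minkowski_sum w \<alpha> A \<beta> B) v = normal_cone A a \<inter> normal_cone B b
                       \<and> (\<exists>x. exposes x A a \<and> exposes x B b)"
      using ex exposes_shifted_minkowski_sum[OF assms(1,2) ab(1,2)]
        normal_cone_shifted_minkowski_sum[OF assms(1,2) ab(1,2)] by blast
  next
    fix a b x assume ex: "exposes x A a" "exposes x B b"
    then have ab: "a \<in> A" "b \<in> B" by (simp_all add: exposes_def)
    show "\<exists>v. normal_cone A a \<inter> normal_cone B b = normal_cone (shifted_minkowski_sum w \<alpha> A \<beta> B) v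
                  \<and> (\<exists>x. exposes x (shifted_minkowski_sum w \<alpha> A \<beta> B) v)"
      using ex exposes_shifted_minkowski_sum[OF assms(1,2) ab]
        normal_cone_shifted_minkowski_sum[OF assms(1,2) ab] by blast
  qed
  finally show ?thesis .
qed

section \<open>The cross-polytope and its vertex cones\<close>

lemma convex_sum_mem_of_sum_le_1:
  assumes "convex S" "0 \<in> S" "\<And>i. i \<in> I \<Longrightarrow> u i \<in> S"
    "\<And>i. i \<in> I \<Longrightarrow> c i \<ge> 0" "(\<Sum>i\<in>I. c i) \<le> 1"
  shows "(\<Sum>i\<in>I. c i *\<^sub>R u i) \<in> S"
proof (cases "finite I \<and> (\<Sum>i\<in>I. c i) \<noteq> 0")
  case False
  then have "(\<Sum>i\<in>I. c i *\<^sub>R u i) = 0"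
    using sum_nonneg_eq_0_iff[of I c] assms(4) by auto
  then show ?thesis using assms(2) by simp
next
  case True
  define C where "C = (\<Sum>i\<in>I. c i)"
  have "C > 0" using True assms(4) sum_nonneg[of I c] unfolding C_def by force
  have "(\<Sum>i\<in>I. (c i / C) *\<^sub>R u i) \<in> S"
    using True \<open>C > 0\<close> assms(1,3,4)
    by (intro convex_sum) (auto simp: C_def sum_divide_distrib[symmetric])
  then have "C *\<^sub>R (\<Sum>i\<in>I. (c i / C) *\<^sub>R u i) + (1 - C) *\<^sub>R 0 \<in> S"
    using \<open>C > 0\<close> assms(1,2,5) unfolding C_def by (intro convexD) auto
  moreover have "C *\<^sub>R (\<Sum>i\<in>I. (c i / C) *\<^sub>R u i) = (\<Sum>i\<in>I. c i *\<^sub>R u i)"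
    using \<open>C > 0\<close> by (simp add: scaleR_sum_right)
  ultimately show ?thesis by simp
qed

definition l1_norm :: "real^'n::finite \<Rightarrow> real" where
  "l1_norm x = (\<Sum>i\<in>UNIV. \<bar>x $ i\<bar>)"

definition l1_norm_except :: "'n::finite \<Rightarrow> real^'n \<Rightarrow> real" where
  "l1_norm_except k x = (\<Sum>j\<in>-{k}. \<bar>x $ j\<bar>)"

lemma l1_norm_split: "l1_norm x = \<bar>x $ k\<bar> + l1_norm_except k x"
  unfolding l1_norm_def l1_norm_except_def
  by (subst sum.remove[of UNIV k]) (auto simp: Compl_eq_Diff_UNIV)

lemma l1_norm_except_add: "l1_norm_except k (x + y) \<le> l1_norm_except k x + l1_norm_except k y"
  unfolding l1_norm_except_def by (simp add: sum.distrib[symmetric] sum_mono abs_triangle_ineq)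

lemma l1_norm_except_scaleR: "l1_norm_except k (c *\<^sub>R x) = \<bar>c\<bar> * l1_norm_except k x"
  unfolding l1_norm_except_def by (simp add: abs_mult sum_distrib_left)

lemma l1_norm_except_minus [simp]: "l1_norm_except k (- x) = l1_norm_except k x"
  unfolding l1_norm_except_def by simp

lemma l1_norm_except_cong: "(\<And>j. j \<noteq> k \<Longrightarrow> x $ j = y $ j) \<Longrightarrow> l1_norm_except k x = l1_norm_except k y"
  unfolding l1_norm_except_def by (intro sum.cong) auto

lemma basis_expansion_except: "(\<Sum>j\<in>-{k}. x $ j *\<^sub>R axis j 1) = x - x $ k *\<^sub>R axis k (1::real)"
proof -
  have "x = (\<Sum>j\<in>UNIV. x $ j *\<^sub>R axis j 1)"
    using basis_expansion[of x] by (simp add: scalar_mult_eq_scaleR)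
  also have "\<dots> = x $ k *\<^sub>R axis k 1 + (\<Sum>j\<in>-{k}. x $ j *\<^sub>R axis j 1)"
    by (simp add: sum.remove[of UNIV k] Compl_eq_Diff_UNIV)
  finally show ?thesis by (simp add: algebra_simps)
qed

lemma l1_norm_convex_ball: "convex {p. l1_norm p \<le> 1}"
  unfolding convex_def mem_Collect_eq
proof clarify
  fix x y :: "real^'n" and u v :: real
  assume x: "l1_norm x \<le> 1" and y: "l1_norm y \<le> 1" and "0 \<le> u" "0 \<le> v" "u + v = 1"
  have "\<bar>u * x $ i + v * y $ i\<bar> \<le> u * \<bar>x $ i\<bar> + v * \<bar>y $ i\<bar>" for i
    using abs_triangle_ineq[of "u * x $ i" "v * y $ i"] \<open>0 \<le> u\<close> \<open>0 \<le> v\<close>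
    by (simp add: abs_mult)
  then have "l1_norm (u *\<^sub>R x + v *\<^sub>R y) \<le> u * l1_norm x + v * l1_norm y"
    unfolding l1_norm_def by (simp add: sum_mono sum_distrib_left sum.distrib[symmetric])
  also have "\<dots> \<le> u + v" using x y \<open>0 \<le> u\<close> \<open>0 \<le> v\<close> by (intro add_mono mult_left_le) auto
  finally show "l1_norm (u *\<^sub>R x + v *\<^sub>R y) \<le> 1" using \<open>u + v = 1\<close> by simp
qed

lemma l1_norm_scaleR_axis: "l1_norm (c *\<^sub>R axis i 1 :: real^'n::finite) = \<bar>c\<bar>"
proof -
  have "\<bar>(c *\<^sub>R axis i 1 :: real^'n) $ j\<bar> = (if j = i then \<bar>c\<bar> else 0)" for j
    by (simp add: axis_def)
  then show ?thesis unfolding l1_norm_def by simp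
qed

lemma cross_polytope_eq_l1_ball: "cross_polytope = {p :: real^'n::finite. l1_norm p \<le> 1}"
proof
  show "cross_polytope \<subseteq> {p :: real^'n. l1_norm p \<le> 1}"
    unfolding cross_polytope_def
    using l1_norm_scaleR_axis[of 1 _, where 'n='n] l1_norm_scaleR_axis[of "-1" _, where 'n='n]
    by (intro hull_minimal l1_norm_convex_ball) auto
  show "{p :: real^'n. l1_norm p \<le> 1} \<subseteq> cross_polytope"
  proof
    fix p :: "real^'n" assume p: "p \<in> {p. l1_norm p \<le> 1}"
    have cvx: "convex (cross_polytope :: (real^'n) set)"
      unfolding cross_polytope_def by (rule convex_convex_hull)
    have vertices: "axis i 1 \<in> cross_polytope" "- axis i 1 \<in> cross_polytope" for i :: 'n
      unfolding cross_polytope_def by (auto intro: hull_inc)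
    have zero: "0 \<in> (cross_polytope :: (real^'n) set)"
      using convexD[OF cvx vertices(1)[of undefined] vertices(2)[of undefined], of "1/2" "1/2"] by simp
    have "sgn (p $ i) *\<^sub>R axis i 1 \<in> cross_polytope" for i
      using vertices zero by (cases "p $ i" "0::real" rule: linorder_cases) auto
    then have "(\<Sum>i\<in>UNIV. \<bar>p $ i\<bar> *\<^sub>R (sgn (p $ i) *\<^sub>R axis i 1)) \<in> cross_polytope"
      using p by (intro convex_sum_mem_of_sum_le_1[OF cvx zero]) (auto simp: l1_norm_def)
    moreover have "(\<Sum>i\<in>UNIV. \<bar>p $ i\<bar> *\<^sub>R (sgn (p $ i) *\<^sub>R axis i 1)) = p"
      using basis_expansion[of p] by (simp add: scalar_mult_eq_scaleR abs_mult_sgn)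
    ultimately show "p \<in> cross_polytope" by simp
  qed
qed

lemma image_uminus_eq: "uminus ` S = {x :: 'a::group_add. - x \<in> S}"
proof (intro equalityI subsetI)
  fix x assume "x \<in> {x. - x \<in> S}"
  then have "- x \<in> S" by simp
  then show "x \<in> uminus ` S" by (rule rev_image_eqI) simp
qed auto

lemma uminus_cross_polytope [simp]: "uminus ` cross_polytope = (cross_polytope :: (real^'n::finite) set)"
  by (simp add: image_uminus_eq cross_polytope_eq_l1_ball l1_norm_def)

lemma convex_cone_axis_l1_cone: "convex_cone {y :: real^'n::finite. y $ k + l1_norm_except k y \<le> 0}"
  unfolding convex_cone_iff
proof (intro conjI ballI allI impI)
  show "0 \<in> {y :: real^'n. y $ k + l1_norm_except k y \<le> 0}" by (simp add: l1_norm_except_def)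
next
  fix x y :: "real^'n"
  assume "x \<in> {y. y $ k + l1_norm_except k y \<le> 0}" "y \<in> {y. y $ k + l1_norm_except k y \<le> 0}"
  then show "x + y \<in> {y. y $ k + l1_norm_except k y \<le> 0}" using l1_norm_except_add[of k x y] by simp
next
  fix x :: "real^'n" and c :: real assume "x \<in> {y. y $ k + l1_norm_except k y \<le> 0}" "c \<ge> 0"
  then show "c *\<^sub>R x \<in> {y. y $ k + l1_norm_except k y \<le> 0}"
    by (simp add: l1_norm_except_scaleR mult_nonneg_nonpos flip: distrib_left)
qed

lemma axis_l1_cone_subset_nonneg_comb:
  "{y :: real^'n::finite. y $ k + l1_norm_except k y \<le> 0} \<subseteq> nonneg_comb ((\<lambda>y. y - axis k 1) ` cross_polytope)"
proof
  let ?H = "convex_cone hull ((\<lambda>y. y - axis k 1) ` (cross_polytope :: (real^'n) set))"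
  fix y :: "real^'n" assume "y \<in> {y. y $ k + l1_norm_except k y \<le> 0}"
  define F where "F = - (y $ k + l1_norm_except k y)"
  have "F \<ge> 0" using \<open>y \<in> _\<close> by (simp add: F_def)
  have gen: "c *\<^sub>R axis j 1 - axis k 1 \<in> ?H" if "\<bar>c\<bar> \<le> 1" for c j
    using that by (intro hull_inc imageI) (simp add: cross_polytope_eq_l1_ball l1_norm_scaleR_axis)
  have "(\<Sum>j\<in>-{k}. \<bar>y $ j\<bar> *\<^sub>R (sgn (y $ j) *\<^sub>R axis j 1 - axis k 1))
          + (F / 2) *\<^sub>R ((-1) *\<^sub>R axis k 1 - axis k 1) \<in> ?H"
    using \<open>F \<ge> 0\<close> gen[of "sgn _"] gen[of "-1" k] convex_cone_convex_cone_hull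
    by (intro convex_cone_hull_add convex_cone_hull_mul convex_cone_sum) (auto simp: abs_sgn_eq)
  also have "(\<Sum>j\<in>-{k}. \<bar>y $ j\<bar> *\<^sub>R (sgn (y $ j) *\<^sub>R axis j 1 - axis k 1))
               = (\<Sum>j\<in>-{k}. y $ j *\<^sub>R axis j 1) - l1_norm_except k y *\<^sub>R axis k 1"
    unfolding l1_norm_except_def by (simp add: scaleR_diff_right sum_subtractf abs_mult_sgn scaleR_sum_left)
  also have "(F / 2) *\<^sub>R ((-1) *\<^sub>R axis k 1 - axis k 1) = (- F) *\<^sub>R (axis k 1 :: real^'n)"
    by (simp add: vec_eq_iff axis_def)
  also have "(\<Sum>j\<in>-{k}. y $ j *\<^sub>R axis j 1) - l1_norm_except k y *\<^sub>R axis k 1 + (- F) *\<^sub>R axis k 1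
               = y - (y $ k + l1_norm_except k y + F) *\<^sub>R axis k 1"
    unfolding basis_expansion_except by (simp add: algebra_simps)
  also have "\<dots> = y" by (simp add: F_def)
  finally show "y \<in> nonneg_comb ((\<lambda>y. y - axis k 1) ` cross_polytope)"
    by (simp add: nonneg_comb_eq_convex_cone_hull)
qed

lemma nonneg_comb_cross_polytope_minus_axis:
  "nonneg_comb ((\<lambda>y. y - axis k 1) ` cross_polytope) = {y :: real^'n::finite. y $ k + l1_norm_except k y \<le> 0}"
proof
  have "(\<lambda>y. y - axis k 1) ` cross_polytope \<subseteq> {y :: real^'n. y $ k + l1_norm_except k y \<le> 0}"
  proof (rule image_subsetI)
    fix p :: "real^'n" assume "p \<in> cross_polytope"
    then have "\<bar>p $ k\<bar> + l1_norm_except k p \<le> 1"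
      by (simp add: cross_polytope_eq_l1_ball l1_norm_split[of p k])
    moreover have "l1_norm_except k (p - axis k 1) = l1_norm_except k p"
      by (rule l1_norm_except_cong) (simp add: axis_def)
    ultimately show "p - axis k 1 \<in> {y. y $ k + l1_norm_except k y \<le> 0}" by (simp add: axis_def)
  qed
  then show "nonneg_comb ((\<lambda>y. y - axis k 1) ` cross_polytope) \<subseteq> {y. y $ k + l1_norm_except k y \<le> 0}"
    unfolding nonneg_comb_eq_convex_cone_hull
    by (rule hull_minimal[where S = convex_cone, OF _ convex_cone_axis_l1_cone])
qed (rule axis_l1_cone_subset_nonneg_comb)

lemma nonneg_comb_cross_polytope_plus_axis:
  "nonneg_comb ((\<lambda>y. y + axis k 1) ` cross_polytope) = {y :: real^'n::finite. - y $ k + l1_norm_except k y \<le> 0}"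
proof -
  have "(\<lambda>y. y + axis k 1) ` cross_polytope = (\<lambda>y. y + axis k 1) ` uminus ` (cross_polytope :: (real^'n) set)"
    by simp
  also have "\<dots> = uminus ` ((\<lambda>y. y - axis k 1) ` cross_polytope)"
    unfolding image_image by (intro image_cong) auto
  finally have "nonneg_comb ((\<lambda>y. y + axis k 1) ` cross_polytope)
      = uminus ` {y :: real^'n. y $ k + l1_norm_except k y \<le> 0}"
    by (simp only: nonneg_comb_uminus nonneg_comb_cross_polytope_minus_axis)
  then show ?thesis by (simp add: image_uminus_eq)
qed

lemma polytope_cross_polytope: "polytope (cross_polytope :: (real^'n::finite) set)"
  unfolding cross_polytope_def by (rule polytope_convex_hull) simp

text \<open>Otherwise the hyperplane \<open>\<sigma> \<bullet> x = 1\<close>, with \<sigma> the sign vector of z, separates the two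
  cross-polytopes.\<close>
lemma l1_norm_less_2_if_aff_dim_Int:
  fixes z :: "real^'n::finite"
  assumes "aff_dim (cross_polytope \<inter> ((+) z ` cross_polytope)) = int CARD('n)"
  shows "l1_norm z < 2"
proof (rule ccontr)
  assume "\<not> l1_norm z < 2"
  define \<sigma> :: "real^'n" where "\<sigma> = (\<chi> i. sgn (z $ i))"
  have \<sigma>_bounds: "\<bar>\<sigma> \<bullet> x\<bar> \<le> l1_norm x" for x
  proof -
    have "\<bar>\<sigma> \<bullet> x\<bar> \<le> (\<Sum>i\<in>UNIV. \<bar>sgn (z $ i) * x $ i\<bar>)"
      unfolding \<sigma>_def inner_vec_def by (simp add: sum_abs)
    also have "\<dots> \<le> l1_norm x"
      unfolding l1_norm_def by (intro sum_mono) (simp add: abs_mult abs_sgn_eq mult_left_le_one_le)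
    finally show ?thesis .
  qed
  have "\<sigma> \<bullet> z = l1_norm z"
    unfolding \<sigma>_def inner_vec_def l1_norm_def by (simp add: abs_sgn mult.commute)
  have "\<sigma> \<bullet> x = 1" if x: "x \<in> cross_polytope" "x \<in> (+) z ` cross_polytope" for x
  proof -
    obtain p where "p \<in> cross_polytope" "x = z + p" using x(2) by blast
    then have "\<sigma> \<bullet> x \<ge> l1_norm z - l1_norm p" "l1_norm p \<le> 1"
      using \<open>\<sigma> \<bullet> z = l1_norm z\<close> \<sigma>_bounds[of p]
      by (auto simp: inner_add_right cross_polytope_eq_l1_ball)
    moreover have "\<sigma> \<bullet> x \<le> 1"
      using x(1) \<sigma>_bounds[of x] by (simp add: cross_polytope_eq_l1_ball)
    ultimately show ?thesis using \<open>\<not> l1_norm z < 2\<close> by linarith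
  qed
  then have "cross_polytope \<inter> ((+) z ` cross_polytope) \<subseteq> {x. \<sigma> \<bullet> x = 1}" by blast
  moreover have "\<sigma> \<noteq> 0" using \<open>\<sigma> \<bullet> z = l1_norm z\<close> \<open>\<not> l1_norm z < 2\<close> by auto
  ultimately have "aff_dim (cross_polytope \<inter> ((+) z ` cross_polytope)) \<le> int CARD('n) - 1"
    using aff_dim_subset[of _ "{x. \<sigma> \<bullet> x = 1}"] by fastforce
  then show False using assms by simp
qed

section \<open>The intersection of the two cones as a Minkowski sum\<close>

lemma real_abs_split_segment:
  fixes x b :: real
  shows "\<exists>m. 0 \<le> m \<and> m \<le> 1 \<and> \<bar>x\<bar> = m * \<bar>b\<bar> + \<bar>x - m * b\<bar> \<and> \<bar>x - b\<bar> = (1 - m) * \<bar>b\<bar> + \<bar>x - m * b\<bar>"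
proof (cases "b = 0")
  case False
  consider "x * b \<le> 0" | "x * b \<ge> b * b" | "0 < x * b \<and> x * b < b * b" by linarith
  then show ?thesis
  proof cases
    case 1
    then have "\<bar>x - b\<bar> = \<bar>b\<bar> + \<bar>x\<bar>"
      by (smt (verit, del_insts) diff_add_cancel diff_diff_eq le_add_same_cancel1 mult_le_0_iff order_trans)
    then show ?thesis by (intro exI[of _ 0]) auto
  next
    case 2
    then have "\<bar>x\<bar> = \<bar>b\<bar> + \<bar>x - b\<bar>"
      by (smt (verit, best) mult_right_cancel mult_right_mono mult_right_mono_neg)
    then show ?thesis by (intro exI[of _ 1]) auto
  next
    case 3
    define m where "m = x / b"
    have m: "0 < m" "m < 1" "x = m * b" using 3 False unfolding m_def
      by (simp_all add: divide_less_eq_1 mult_less_cancel_right_disj zero_less_divide_iff zero_less_mult_iff)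
    have "\<bar>x - b\<bar> = \<bar>m - 1\<bar> * \<bar>b\<bar>" using m(3) by (metis abs_mult left_diff_distrib' mult_1)
    with m have "\<bar>x\<bar> = m * \<bar>b\<bar>" "\<bar>x - b\<bar> = (1 - m) * \<bar>b\<bar>" by (simp_all add: abs_mult)
    then show ?thesis using m by (intro exI[of _ m]) auto
  qed
qed (intro exI[of _ 0], simp)

lemma image_add_eq: "(+) w ` S = {x :: 'a::ab_group_add. x - w \<in> S}"
proof (intro equalityI subsetI)
  fix x assume "x \<in> {x. x - w \<in> S}"
  then have "x - w \<in> S" by simp
  then show "x \<in> (+) w ` S" by (rule rev_image_eqI) simp
qed auto

text \<open>The polytope of part (b) for \<open>u = t z\<close>; the coordinate k plays the role of n.\<close>
definition cross_cones_Int :: "'n::finite \<Rightarrow> real^'n \<Rightarrow> (real^'n) set" where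
  "cross_cones_Int k u =
     ((+) (axis k 1) ` nonneg_comb ((\<lambda>y. y - axis k 1) ` cross_polytope))
     \<inter> ((+) (u - axis k 1) ` nonneg_comb ((\<lambda>y. y + axis k 1) ` cross_polytope))"

lemma mem_cross_cones_Int:
  "x \<in> cross_cones_Int k u \<longleftrightarrow>
     x $ k + l1_norm_except k x \<le> 1 \<and> u $ k - x $ k + l1_norm_except k (x - u) \<le> 1"
proof -
  have "l1_norm_except k (x - axis k 1) = l1_norm_except k x"
    "l1_norm_except k (x - (u - axis k 1)) = l1_norm_except k (x - u)"
    by (auto intro: l1_norm_except_cong simp: axis_def)
  then show ?thesis
    unfolding cross_cones_Int_def image_add_eq nonneg_comb_cross_polytope_minus_axis
      nonneg_comb_cross_polytope_plus_axis
    by (simp add: axis_def, arith)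
qed

definition cross_zonotope_map :: "'n::finite \<Rightarrow> real^'n \<Rightarrow> real^'n \<Rightarrow> real^'n" where
  "cross_zonotope_map k u \<mu> = (\<Sum>j\<in>-{k}. \<mu> $ j *\<^sub>R (u $ j *\<^sub>R axis j 1 - \<bar>u $ j\<bar> *\<^sub>R axis k 1))"

definition cross_zonotope :: "'n::finite \<Rightarrow> real^'n \<Rightarrow> (real^'n) set" where
  "cross_zonotope k u = cross_zonotope_map k u ` cbox 0 1"

lemma cross_zonotope_map_nth:
  "cross_zonotope_map k u \<mu> $ i = (if i = k then - (\<Sum>j\<in>-{k}. \<mu> $ j * \<bar>u $ j\<bar>) else \<mu> $ i * u $ i)"
proof -
  have "cross_zonotope_map k u \<mu> $ i
      = (\<Sum>j\<in>-{k}. (if j = i then \<mu> $ j * u $ j else 0) - (if i = k then \<mu> $ j * \<bar>u $ j\<bar> else 0))"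
    unfolding cross_zonotope_map_def sum_component by (intro sum.cong) (auto simp: axis_def)
  then show ?thesis by (simp add: sum_subtractf sum.delta)
qed

lemma l1_norm_except_cross_zonotope_map:
  assumes "\<mu> \<in> cbox 0 1"
  shows "l1_norm_except k (cross_zonotope_map k u \<mu>) = (\<Sum>j\<in>-{k}. \<mu> $ j * \<bar>u $ j\<bar>)"
    and "l1_norm_except k (cross_zonotope_map k u \<mu> - u) = l1_norm_except k u - (\<Sum>j\<in>-{k}. \<mu> $ j * \<bar>u $ j\<bar>)"
proof -
  have \<mu>01: "0 \<le> \<mu> $ j" "\<mu> $ j \<le> 1" for j using assms by (auto simp: mem_box_cart)
  show "l1_norm_except k (cross_zonotope_map k u \<mu>) = (\<Sum>j\<in>-{k}. \<mu> $ j * \<bar>u $ j\<bar>)"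
    unfolding l1_norm_except_def by (intro sum.cong) (auto simp: cross_zonotope_map_nth abs_mult \<mu>01)
  have "\<bar>\<mu> $ j * u $ j - u $ j\<bar> = \<bar>u $ j\<bar> - \<mu> $ j * \<bar>u $ j\<bar>" for j
  proof -
    have "\<bar>\<mu> $ j * u $ j - u $ j\<bar> = \<bar>\<mu> $ j - 1\<bar> * \<bar>u $ j\<bar>" by (metis abs_mult left_diff_distrib' mult_1)
    then show ?thesis using \<mu>01[of j] by (simp add: abs_of_nonpos left_diff_distrib)
  qed
  then show "l1_norm_except k (cross_zonotope_map k u \<mu> - u) = l1_norm_except k u - (\<Sum>j\<in>-{k}. \<mu> $ j * \<bar>u $ j\<bar>)"
    unfolding l1_norm_except_def sum_subtractf[symmetric] by (intro sum.cong) (auto simp: cross_zonotope_map_nth)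
qed

text \<open>For \<open>j \<noteq> k\<close>, the coordinate \<open>q $ j\<close> is the point of the segment between 0 and \<open>u $ j\<close>
  nearest to \<open>x $ j\<close>.\<close>
lemma cross_zonotope_between:
  fixes x u :: "real^'n::finite" and k :: 'n
  obtains q where "q \<in> cross_zonotope k u"
    "l1_norm_except k x = l1_norm_except k q + l1_norm_except k (x - q)"
    "l1_norm_except k (x - u) = l1_norm_except k (q - u) + l1_norm_except k (x - q)"
proof -
  have "\<forall>j. \<exists>m. 0 \<le> m \<and> m \<le> 1 \<and> \<bar>x $ j\<bar> = m * \<bar>u $ j\<bar> + \<bar>x $ j - m * u $ j\<bar>
                 \<and> \<bar>x $ j - u $ j\<bar> = (1 - m) * \<bar>u $ j\<bar> + \<bar>x $ j - m * u $ j\<bar>"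
    using real_abs_split_segment by blast
  then obtain m where m: "\<And>j. 0 \<le> m j \<and> m j \<le> 1 \<and> \<bar>x $ j\<bar> = m j * \<bar>u $ j\<bar> + \<bar>x $ j - m j * u $ j\<bar>
                 \<and> \<bar>x $ j - u $ j\<bar> = (1 - m j) * \<bar>u $ j\<bar> + \<bar>x $ j - m j * u $ j\<bar>"
    by metis
  define \<mu> :: "real^'n" where "\<mu> = (\<chi> j. m j)"
  have \<mu>: "\<mu> \<in> cbox 0 1" using m by (simp add: mem_box_cart \<mu>_def)
  have "l1_norm_except k (x - cross_zonotope_map k u \<mu>) = (\<Sum>j\<in>-{k}. \<bar>x $ j - m j * u $ j\<bar>)"
    unfolding l1_norm_except_def by (intro sum.cong) (auto simp: cross_zonotope_map_nth \<mu>_def)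
  moreover have "l1_norm_except k x = (\<Sum>j\<in>-{k}. m j * \<bar>u $ j\<bar>) + (\<Sum>j\<in>-{k}. \<bar>x $ j - m j * u $ j\<bar>)"
    "l1_norm_except k (x - u)
       = l1_norm_except k u - (\<Sum>j\<in>-{k}. m j * \<bar>u $ j\<bar>) + (\<Sum>j\<in>-{k}. \<bar>x $ j - m j * u $ j\<bar>)"
    unfolding l1_norm_except_def using m
    by (simp_all add: sum.distrib[symmetric] sum_subtractf[symmetric] left_diff_distrib)
  ultimately show ?thesis
    using that[of "cross_zonotope_map k u \<mu>"] \<mu> l1_norm_except_cross_zonotope_map[OF \<mu>, of k u]
    unfolding cross_zonotope_def by (simp add: \<mu>_def)
qed

lemma shifted_minkowski_sum_subset_cross_cones_Int:
  fixes u :: "real^'n::finite" and k :: 'n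
  defines "s \<equiv> 2 - u $ k - l1_norm_except k u"
  assumes "s > 0"
  shows "shifted_minkowski_sum ((1 - s / 2) *\<^sub>R axis k 1) (s / 2) cross_polytope 1 (cross_zonotope k u)
           \<subseteq> cross_cones_Int k u"
proof
  fix x assume "x \<in> shifted_minkowski_sum ((1 - s / 2) *\<^sub>R axis k 1) (s / 2) cross_polytope 1 (cross_zonotope k u)"
  then obtain p \<mu> where p: "p \<in> cross_polytope" and \<mu>: "\<mu> \<in> cbox 0 1"
    and x: "x = (1 - s / 2) *\<^sub>R axis k 1 + (s / 2) *\<^sub>R p + cross_zonotope_map k u \<mu>"
    unfolding cross_zonotope_def by (auto elim!: shifted_minkowski_sumE)
  define M where "M = (\<Sum>j\<in>-{k}. \<mu> $ j * \<bar>u $ j\<bar>)"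
  have "\<bar>p $ k\<bar> + l1_norm_except k p \<le> 1"
    using p by (simp add: cross_polytope_eq_l1_ball l1_norm_split[of p k])
  then have "p $ k + l1_norm_except k p \<le> 1" "- p $ k + l1_norm_except k p \<le> 1" by linarith+
  then have "s / 2 * (p $ k + l1_norm_except k p) \<le> s / 2" "s / 2 * (- p $ k + l1_norm_except k p) \<le> s / 2"
    using \<open>s > 0\<close> by (simp_all add: mult_left_le)
  then have p_bounds: "s / 2 * p $ k + s / 2 * l1_norm_except k p \<le> s / 2"
    "- (s / 2 * p $ k) + s / 2 * l1_norm_except k p \<le> s / 2"
    by (simp_all only: distrib_left mult_minus_right)
  have xk: "x $ k = 1 - s / 2 + s / 2 * p $ k - M"
    by (simp add: x cross_zonotope_map_nth M_def axis_def)
  have "l1_norm_except k x = l1_norm_except k ((s / 2) *\<^sub>R p + cross_zonotope_map k u \<mu>)"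
    by (rule l1_norm_except_cong) (simp add: x axis_def)
  then have x_bound: "l1_norm_except k x \<le> s / 2 * l1_norm_except k p + M"
    using l1_norm_except_add[of k "(s / 2) *\<^sub>R p" "cross_zonotope_map k u \<mu>"]
      l1_norm_except_cross_zonotope_map[OF \<mu>, of k u] \<open>s > 0\<close>
    by (simp add: l1_norm_except_scaleR M_def)
  have "l1_norm_except k (x - u) = l1_norm_except k ((s / 2) *\<^sub>R p + (cross_zonotope_map k u \<mu> - u))"
    by (rule l1_norm_except_cong) (simp add: x axis_def)
  then have "l1_norm_except k (x - u) \<le> s / 2 * l1_norm_except k p + (l1_norm_except k u - M)"
    using l1_norm_except_add[of k "(s / 2) *\<^sub>R p" "cross_zonotope_map k u \<mu> - u"]
      l1_norm_except_cross_zonotope_map[OF \<mu>, of k u] \<open>s > 0\<close>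
    by (simp add: l1_norm_except_scaleR M_def)
  with x_bound show "x \<in> cross_cones_Int k u"
    unfolding mem_cross_cones_Int using xk p_bounds s_def by linarith
qed

lemma cross_cones_Int_subset_shifted_minkowski_sum:
  fixes u :: "real^'n::finite" and k :: 'n
  defines "s \<equiv> 2 - u $ k - l1_norm_except k u"
  assumes "s > 0"
  shows "cross_cones_Int k u
           \<subseteq> shifted_minkowski_sum ((1 - s / 2) *\<^sub>R axis k 1) (s / 2) cross_polytope 1 (cross_zonotope k u)"
proof
  fix x assume "x \<in> cross_cones_Int k u"
  then have in_cones: "x $ k + l1_norm_except k x \<le> 1" "u $ k - x $ k + l1_norm_except k (x - u) \<le> 1"
    by (simp_all add: mem_cross_cones_Int)
  obtain q where q: "q \<in> cross_zonotope k u"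
    "l1_norm_except k x = l1_norm_except k q + l1_norm_except k (x - q)"
    "l1_norm_except k (x - u) = l1_norm_except k (q - u) + l1_norm_except k (x - q)"
    by (rule cross_zonotope_between)
  then obtain \<mu> where \<mu>: "\<mu> \<in> cbox 0 1" "q = cross_zonotope_map k u \<mu>"
    unfolding cross_zonotope_def by blast
  define M where "M = (\<Sum>j\<in>-{k}. \<mu> $ j * \<bar>u $ j\<bar>)"
  define w where "w = (1 - s / 2) *\<^sub>R axis k (1::real)"
  define p where "p = (2 / s) *\<^sub>R (x - w - q)"
  define A where "A = x $ k - 1 + s / 2 + M"
  have A_bound: "\<bar>A\<bar> + l1_norm_except k (x - q) \<le> s / 2"
    using in_cones q l1_norm_except_cross_zonotope_map[OF \<mu>(1), of k u] s_def
    unfolding A_def M_def \<mu>(2) by linarith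
  have "p $ k = 2 / s * A"
    by (simp add: p_def w_def \<mu>(2) cross_zonotope_map_nth M_def A_def axis_def)
  moreover have "l1_norm_except k p = 2 / s * l1_norm_except k (x - q)"
  proof -
    have "l1_norm_except k (x - w - q) = l1_norm_except k (x - q)"
      by (rule l1_norm_except_cong) (simp add: w_def axis_def)
    then show ?thesis using \<open>s > 0\<close> by (simp add: p_def l1_norm_except_scaleR)
  qed
  ultimately have "l1_norm p = 2 / s * (\<bar>A\<bar> + l1_norm_except k (x - q))"
    using \<open>s > 0\<close> by (simp add: l1_norm_split[of p k] abs_mult distrib_left)
  also have "\<dots> \<le> 2 / s * (s / 2)"
    using A_bound \<open>s > 0\<close> by (intro mult_left_mono) auto
  also have "\<dots> = 1" using \<open>s > 0\<close> by simp
  finally have "p \<in> cross_polytope" by (simp add: cross_polytope_eq_l1_ball)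
  moreover have "x = w + (s / 2) *\<^sub>R p + 1 *\<^sub>R q"
    using \<open>s > 0\<close> by (simp add: p_def)
  ultimately show "x \<in> shifted_minkowski_sum ((1 - s / 2) *\<^sub>R axis k 1) (s / 2) cross_polytope 1 (cross_zonotope k u)"
    using q(1) unfolding w_def by blast
qed

lemma cross_cones_Int_eq_shifted_minkowski_sum:
  fixes u :: "real^'n::finite" and k :: 'n
  defines "s \<equiv> 2 - u $ k - l1_norm_except k u"
  assumes "s > 0"
  shows "cross_cones_Int k u
           = shifted_minkowski_sum ((1 - s / 2) *\<^sub>R axis k 1) (s / 2) cross_polytope 1 (cross_zonotope k u)"
  using cross_cones_Int_subset_shifted_minkowski_sum shifted_minkowski_sum_subset_cross_cones_Int assms
  by (intro equalityI) blast+

lemma cross_zonotope_scaleR: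
  assumes "t \<ge> 0"
  shows "cross_zonotope k (t *\<^sub>R z) = (\<lambda>q. t *\<^sub>R q) ` cross_zonotope k z"
proof -
  have "cross_zonotope_map k (t *\<^sub>R z) \<mu> = t *\<^sub>R cross_zonotope_map k z \<mu>" for \<mu>
    using assms by (simp add: cross_zonotope_map_def scaleR_sum_right abs_mult algebra_simps)
  then show ?thesis unfolding cross_zonotope_def image_image by simp
qed

lemma polytope_cross_zonotope: "polytope (cross_zonotope k z)"
  unfolding cross_zonotope_def
proof (rule polytope_linear_image[OF _ polytope_interval])
  show "linear (cross_zonotope_map k z)"
    unfolding cross_zonotope_map_def
    by (rule linearI) (simp_all add: scaleR_add_left sum.distrib scaleR_sum_right)
qed

lemma normal_fan_cross_cones_Int:
  fixes z :: "real^'n::finite" and k :: 'n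
  assumes "t > 0" "t * (z $ k + l1_norm_except k z) < 2"
  shows "normal_fan (cross_cones_Int k (t *\<^sub>R z)) = fan_refinement cross_polytope (cross_zonotope k z)"
proof -
  define s where "s = 2 - (t *\<^sub>R z) $ k - l1_norm_except k (t *\<^sub>R z)"
  have "s > 0" using assms by (simp add: s_def l1_norm_except_scaleR algebra_simps)
  then have "cross_cones_Int k (t *\<^sub>R z)
      = shifted_minkowski_sum ((1 - s / 2) *\<^sub>R axis k 1) (s / 2) cross_polytope 1 (cross_zonotope k (t *\<^sub>R z))"
    unfolding s_def by (rule cross_cones_Int_eq_shifted_minkowski_sum)
  also have "\<dots> = shifted_minkowski_sum ((1 - s / 2) *\<^sub>R axis k 1) (s / 2) cross_polytope t (cross_zonotope k z)"
    using \<open>t > 0\<close> by (simp add: cross_zonotope_scaleR shifted_minkowski_sum_scaleR_image)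
  finally have "cross_cones_Int k (t *\<^sub>R z)
      = shifted_minkowski_sum ((1 - s / 2) *\<^sub>R axis k 1) (s / 2) cross_polytope t (cross_zonotope k z)" .
  moreover have "polyhedron (shifted_minkowski_sum ((1 - s / 2) *\<^sub>R axis k 1) (s / 2) cross_polytope t (cross_zonotope k z))"
    by (intro polytope_imp_polyhedron polytope_shifted_minkowski_sum polytope_cross_polytope polytope_cross_zonotope)
  ultimately show ?thesis
    using \<open>s > 0\<close> \<open>t > 0\<close> by (simp add: normal_fan_shifted_minkowski_sum)
qed

lemma near_one_scaling_bound:
  fixes S a t :: real
  assumes "0 \<le> S" "S < 2" "a \<le> S" "1 - (2 - S) / 4 < t" "t < 1 + (2 - S) / 4"
  shows "0 < t" "t * a < 2"
proof -
  show "0 < t" using assms by (simp add: field_simps)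
  then have "t * a \<le> t * S" using assms(3) by (simp add: mult_left_mono)
  also have "\<dots> \<le> (1 + (2 - S) / 4) * S" using assms by (intro mult_right_mono) auto
  also have "\<dots> = 2 - (2 - S) * (4 - S) / 4" by (simp add: field_simps)
  also have "\<dots> < 2" using assms by simp
  finally show "t * a < 2" .
qed

lemma normal_fan_cross_cones_Int_locally_constant:
  fixes z :: "real^'n::finite" and k :: 'n
  assumes "aff_dim (cross_polytope \<inter> ((+) z ` cross_polytope)) = int CARD('n)"
  shows "\<exists>\<epsilon>>0. \<forall>t. 1 - \<epsilon> < t \<and> t < 1 + \<epsilon> \<longrightarrow>
           normal_fan (cross_cones_Int k (t *\<^sub>R z)) = normal_fan (cross_cones_Int k z)"
proof -
  have "l1_norm z < 2" using assms by (rule l1_norm_less_2_if_aff_dim_Int)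
  moreover have "0 \<le> l1_norm z" by (simp add: l1_norm_def sum_nonneg)
  moreover have "z $ k + l1_norm_except k z \<le> l1_norm z" using l1_norm_split[of z k] by linarith
  ultimately have "normal_fan (cross_cones_Int k (t *\<^sub>R z)) = fan_refinement cross_polytope (cross_zonotope k z)"
    if "1 - (2 - l1_norm z) / 4 < t" "t < 1 + (2 - l1_norm z) / 4" for t
    using near_one_scaling_bound[OF _ _ _ that] by (intro normal_fan_cross_cones_Int) auto
  from this this[of 1] show ?thesis
    using \<open>l1_norm z < 2\<close> by (intro exI[of _ "(2 - l1_norm z) / 4"]) auto
qed

theorem lemma6p4:
  fixes k :: "'n::finite"
  shows "(\<forall>(C::(real^'n) set) D x1 x2 x3.
            is_cone C \<and> is_cone D \<and> x1 \<noteq> x2 \<and> x1 \<noteq> x3 \<and> x2 \<noteq> x3 \<and>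
            collinear {x1, x2, x3} \<and> x3 \<notin> closed_segment x1 x2 \<longrightarrow>
            homothetic (((+) x1 ` C) \<inter> ((+) x3 ` D)) (((+) x2 ` C) \<inter> ((+) x3 ` D)))
       \<and> (CARD('n) \<ge> 2 \<longrightarrow>
          (\<forall>z::real^'n.
            aff_dim (cross_polytope \<inter> ((+) z ` cross_polytope)) = int CARD('n) \<longrightarrow>
            (\<exists>\<epsilon>>0. \<forall>t::real. 1 - \<epsilon> < t \<and> t < 1 + \<epsilon> \<longrightarrow>
               normal_fan (((+) (axis k 1) ` nonneg_comb ((\<lambda>y. y - axis k 1) ` cross_polytope))
                           \<inter> ((+) (t *\<^sub>R z - axis k 1) ` nonneg_comb ((\<lambda>y. y + axis k 1) ` cross_polytope)))
             = normal_fan (((+) (axis k 1) ` nonneg_comb ((\<lambda>y. y - axis k 1) ` cross_polytope))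
                           \<inter> ((+) (z - axis k 1) ` nonneg_comb ((\<lambda>y. y + axis k 1) ` cross_polytope))))))"
  using homothetic_translated_cones_Int normal_fan_cross_cones_Int_locally_constant[of _ k]
  unfolding cross_cones_Int_def by auto

end
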